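(* Let $\gamma$ be a $G$-invariant K\"ahler metric on ${\rm M}_1$ of the form $\gamma=A\,d\boldsymbol{\lambda}\cdot d\boldsymbol{\lambda}+\left(\frac{A}{1+\lambda^2}+\frac{A'}{\lambda}\right)(\boldsymbol{\lambda}\cdot d\boldsymbol{\lambda})^2+\frac{1+2\lambda^2}{4}A\,\boldsymbol{\sigma}\cdot\boldsymbol{\sigma}+\frac{1+\lambda^2}{4\lambda}A'(\boldsymbol{\lambda}\cdot\boldsymbol{\sigma})^2+A\,\boldsymbol{\lambda}\cdot(\boldsymbol{\sigma}\times d\boldsymbol{\lambda})$ for a smooth function $A=A(\lambda)$, let $\Omega(X,Y)=\gamma(JX,Y)$ be its K\"ahler form, and let $H$ be a smooth $G$-invariant function on ${\rm M}_1$, written as a function $H(\lambda)$ of $\lambda$. Then the Hamiltonian vector field $X_H$, defined by $\Omega(Y,X_H)=dH(Y)$ for all vector fields $Y$, is $$X_H=\frac{2\sqrt{1+\lambda^2}\,H'(\lambda)}{(1+2\lambda^2)A(\lambda)+(\lambda+\lambda^3)A'(\lambda)}\,\widehat{\boldsymbol{\lambda}}\cdot\boldsymbol{\theta},$$ where $\widehat{\boldsymbol{\lambda}}=\boldsymbol{\lambda}/\lambda$ and $\widehat{\boldsymbol{\lambda}}\cdot\boldsymbol{\theta}=\sum_a\widehat\lambda_a\theta_a$.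
   Context: ${\rm M}_1$ is the space of degree one rational maps $W(z)=\frac{a_{11}z+a_{12}}{a_{21}z+a_{22}}$ of $S^2=\mathbb{C}\cup\{\infty\}$, identified with $PL(2,\mathbb{C})$, with complex structure $J$ induced by the open inclusion into $\mathbb{C}P^3$, $W\mapsto[a_{11}:a_{12}:a_{21}:a_{22}]$. With $\tau_a$ the Pauli matrices, every $[M]\in PL(2,\mathbb{C})$ decomposes uniquely as $[M]=[U](\Lambda\mathbb{I}_2+\boldsymbol{\lambda}\cdot\boldsymbol{\tau})$, $[U]\in PU(2)$, $\boldsymbol{\lambda}\in\mathbb{R}^3$, $\lambda=|\boldsymbol{\lambda}|$, $\Lambda=\sqrt{1+\lambda^2}$, giving ${\rm M}_1\cong PU(2)\times\mathbb{R}^3$. $\theta_a$ are the left-invariant vector fields on $PU(2)$ with value $\frac{i}{2}\tau_a$ at the identity and $\sigma_a$ the dual left-invariant 1-forms, both transported to ${\rm M}_1$ via this product structure (so $\{\partial/\partial\lambda_a,\theta_a\}$ is a frame dual to $\{d\lambda_a,\sigma_a\}$); $\cdot,\times$ are $\mathbb{R}^3$ scalar/vector products applied componentwise, juxtaposition means symmetrized tensor product. $G$ is the group generated by $[M]\mapsto[L][M][R]$ ($[L],[R]\in PU(2)$) and $P:W(z)\mapsto\overline{W(\bar z)}$. *)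

theory Defs
  imports "HOL-Analysis.Analysis"
begin

text \<open>Concrete coordinate model of M_1 = PU(2) x R^3.  A point is a pair (U, x) with U a
  2x2 unitary matrix (representative of [U] in PU(2)) and x the vector lambda in R^3.
  A tangent vector at (U,x) is a pair (v, w) of real 3-vectors, standing for
  sum_a v_a d/dlambda_a + sum_a w_a theta_a (the global frame of the paper).\<close>

type_synonym cmat = "complex^2^2"
type_synonym tvec = "(real^3) \<times> (real^3)"

definition cscale :: "complex \<Rightarrow> cmat \<Rightarrow> cmat" where
  "cscale c M = (\<chi> i j. c * M$i$j)"

definition unitary2 :: "cmat \<Rightarrow> bool" where
  "unitary2 U \<longleftrightarrow> (\<chi> i j. cnj (U$j$i)) ** U = mat 1"

definition pauli :: "3 \<Rightarrow> cmat" where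
  "pauli a =
     (if a = 1 then (\<chi> i j. if i = j then 0 else 1)
      else if a = 2 then (\<chi> i j. if i = j then 0 else if i = 1 then - \<i> else \<i>)
      else (\<chi> i j. if i \<noteq> j then 0 else if i = 1 then 1 else -1))"

definition pauli_dot :: "real^3 \<Rightarrow> cmat" where
  "pauli_dot x = (\<Sum>a\<in>UNIV. (x$a) *\<^sub>R pauli a)"

definition Mfac :: "real^3 \<Rightarrow> cmat" where
  "Mfac x = sqrt (1 + (norm x)\<^sup>2) *\<^sub>R mat 1 + pauli_dot x"

definition Mpt :: "cmat \<Rightarrow> real^3 \<Rightarrow> cmat" where
  "Mpt U x = U ** Mfac x"

text \<open>Differential of (U,x) |-> U (Lambda I + x . tau) applied to the tangent vector (v,w);
  theta_a at U is the velocity of t |-> U exp(t i tau_a / 2).\<close>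
definition dM :: "cmat \<Rightarrow> real^3 \<Rightarrow> tvec \<Rightarrow> cmat" where
  "dM U x X = U ** (cscale (\<i>/2) (pauli_dot (snd X)) ** Mfac x
       + ((x \<bullet> fst X) / sqrt (1 + (norm x)\<^sup>2)) *\<^sub>R mat 1 + pauli_dot (fst X))"

text \<open>Complex structure J induced by the open inclusion into CP^3: the tangent space of
  CP^3 at [M] is C^{2x2} / C M, and J is multiplication by i there.\<close>
definition Jop :: "cmat \<Rightarrow> real^3 \<Rightarrow> tvec \<Rightarrow> tvec" where
  "Jop U x X = (THE Y. \<exists>c. dM U x Y = cscale \<i> (dM U x X) + cscale c (Mpt U x))"

definition dl :: "3 \<Rightarrow> tvec \<Rightarrow> real" where "dl a X = fst X $ a"
definition sig :: "3 \<Rightarrow> tvec \<Rightarrow> real" where "sig a X = snd X $ a"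
definition ldl :: "real^3 \<Rightarrow> tvec \<Rightarrow> real" where "ldl x X = x \<bullet> fst X"
definition lsig :: "real^3 \<Rightarrow> tvec \<Rightarrow> real" where "lsig x X = x \<bullet> snd X"

definition symp :: "(tvec \<Rightarrow> real) \<Rightarrow> (tvec \<Rightarrow> real) \<Rightarrow> tvec \<Rightarrow> tvec \<Rightarrow> real" where
  "symp \<alpha> \<beta> X Y = (\<alpha> X * \<beta> Y + \<beta> X * \<alpha> Y) / 2"

definition eps3 :: "3 \<Rightarrow> 3 \<Rightarrow> 3 \<Rightarrow> real" where
  "eps3 a b c =
     (if (a,b,c) \<in> {(1,2,3),(2,3,1),(3,1,2)} then 1
      else if (a,b,c) \<in> {(1,3,2),(3,2,1),(2,1,3)} then -1 else 0)"

definition gamma :: "(real \<Rightarrow> real) \<Rightarrow> real^3 \<Rightarrow> tvec \<Rightarrow> tvec \<Rightarrow> real" where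
  "gamma A x X Y =
     (let l = norm x; a = A l; a' = deriv A l in
        a * (\<Sum>i\<in>UNIV. symp (dl i) (dl i) X Y)
      + (a / (1 + l\<^sup>2) + a' / l) * symp (ldl x) (ldl x) X Y
      + (1 + 2 * l\<^sup>2) / 4 * a * (\<Sum>i\<in>UNIV. symp (sig i) (sig i) X Y)
      + (1 + l\<^sup>2) / (4 * l) * a' * symp (lsig x) (lsig x) X Y
      + a * (\<Sum>i\<in>UNIV. \<Sum>j\<in>UNIV. \<Sum>k\<in>UNIV. x$i * eps3 i j k * symp (sig j) (dl k) X Y))"

definition Omega :: "(real \<Rightarrow> real) \<Rightarrow> cmat \<Rightarrow> real^3 \<Rightarrow> tvec \<Rightarrow> tvec \<Rightarrow> real" where
  "Omega A U x X Y = gamma A x (Jop U x X) Y"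

definition dH :: "(real \<Rightarrow> real) \<Rightarrow> real^3 \<Rightarrow> tvec \<Rightarrow> real" where
  "dH H x X = frechet_derivative (\<lambda>y. H (norm y)) (at x) (fst X)"

definition HamVF :: "(real \<Rightarrow> real) \<Rightarrow> (real \<Rightarrow> real) \<Rightarrow> cmat \<Rightarrow> real^3 \<Rightarrow> tvec" where
  "HamVF A H U x = (THE Z. \<forall>Y. Omega A U x Y Z = dH H x Y)"

definition smooth_on :: "real set \<Rightarrow> (real \<Rightarrow> real) \<Rightarrow> bool" where
  "smooth_on S f \<longleftrightarrow> (\<exists>D. D 0 = f \<and> (\<forall>n. \<forall>t\<in>S. (D n has_real_derivative D (Suc n) t) (at t)))"

end

theory Submission
  imports Defs
begin

unbundle cross3_syntax

text \<open>In the global frame \<open>(\<partial>/\<partial>\<lambda>, \<theta>)\<close> the complex structure is an explicit linear map,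
  independent of \<open>[U]\<close>: multiplying the differential of \<open>M\<close> by \<open>\<i>\<close> already lands in its
  image, so no multiple of \<open>M\<close> is needed.  Against the vertical field \<open>\<lambda>\<cdot>\<theta>\<close> the metric
  only sees the \<open>\<lambda>\<cdot>\<sigma>\<close>-component of the other argument, and
  \<open>\<lambda>\<cdot>\<sigma>(JY) = 2 \<lambda>\<cdot>d\<lambda>(Y) / \<Lambda>\<close>; hence \<open>\<Omega>(Y, \<lambda>\<cdot>\<theta>)\<close> is a multiple of
  \<open>\<lambda>\<cdot>d\<lambda>(Y)\<close>, as is \<open>dH(Y)\<close>.  Uniqueness follows from \<open>J\<^sup>2 = -1\<close> and positivity of
  \<open>\<gamma>\<close>, which also forces the denominator to be nonzero.\<close>

lemma pauli_dot_nth: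
  "pauli_dot x $ 1 $ 1 = complex_of_real (x$3)"
  "pauli_dot x $ 1 $ 2 = complex_of_real (x$1) - \<i> * complex_of_real (x$2)"
  "pauli_dot x $ 2 $ 1 = complex_of_real (x$1) + \<i> * complex_of_real (x$2)"
  "pauli_dot x $ 2 $ 2 = - complex_of_real (x$3)"
  by (simp_all add: pauli_dot_def pauli_def sum_3, simp_all add: scaleR_conv_of_real)

lemma norm_vec3_sq: "(norm (x::real^3))\<^sup>2 = x$1^2 + x$2^2 + x$3^2"
  by (simp add: norm_vec_def L2_set_def sum_3 power2_eq_square)

definition Lambda :: "real^3 \<Rightarrow> real" where
  "Lambda x = sqrt (1 + (norm x)\<^sup>2)"

lemma Lambda_sq: "(Lambda x)\<^sup>2 = 1 + x$1^2 + x$2^2 + x$3^2"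
  unfolding Lambda_def by (simp add: norm_vec3_sq)

lemma Lambda_pos: "Lambda x > 0"
  unfolding Lambda_def by (simp add: add_pos_nonneg)

text \<open>The coefficients are found by solving \<open>dM(Y) = \<i> dM(X)\<close> entrywise.\<close>
fun J_frame :: "real^3 \<Rightarrow> tvec \<Rightarrow> tvec" where
  "J_frame x (v, w) =
     ((1 / Lambda x) *\<^sub>R (v \<times> x - (1/2) *\<^sub>R w - ((w \<bullet> x) / 2) *\<^sub>R x),
      (1 / Lambda x) *\<^sub>R (2 *\<^sub>R v - w \<times> x))"

lemma J_frame_J_frame: "J_frame x (J_frame x X) = - X"
proof -
  obtain v w where X: "X = (v, w)" by (cases X)
  have "Lambda x \<noteq> 0" using Lambda_pos[of x] by simp
  then show ?thesis
    unfolding X using Lambda_sq[of x]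
    apply (simp add: cross3_def vec_eq_iff forall_3 inner_vec_def sum_3 field_simps)
    apply (intro conjI; algebra)
    done
qed

lemma inner_snd_J_frame: "x \<bullet> snd (J_frame x X) = 2 * (x \<bullet> fst X) / Lambda x"
  by (cases X) (simp add: inner_diff_right dot_cross_self)

definition dM_id :: "real^3 \<Rightarrow> tvec \<Rightarrow> cmat" where
  "dM_id = dM (mat 1)"

lemma dM_eq_mult_dM_id: "dM U x X = U ** dM_id x X"
  by (simp add: dM_id_def dM_def)

lemma dM_id_J_frame: "dM_id x (J_frame x X) = cscale \<i> (dM_id x X)"
proof -
  obtain v w where X: "X = (v, w)" by (cases X)
  have "Lambda x \<noteq> 0" using Lambda_pos[of x] by simp
  then show ?thesis
    unfolding dM_id_def dM_def X using Lambda_sq[of x]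
    apply (simp add: vec_eq_iff forall_2 matrix_matrix_mult_def sum_2 cscale_def Mfac_def
        pauli_dot_nth mat_def inner_vec_def sum_3 cross3_def Lambda_def[symmetric])
    apply (simp add: complex_eq_iff field_simps)
    apply (intro conjI; algebra)
    done
qed

lemma dM_id_inj_mod_Mfac:
  assumes "dM_id x X = dM_id x Y + cscale c (Mfac x)"
  shows "X = Y"
proof -
  obtain v w where X: "X = (v, w)" by (cases X)
  obtain v' w' where Y: "Y = (v', w')" by (cases Y)
  have "Lambda x \<noteq> 0" using Lambda_pos[of x] by simp
  with assms show ?thesis
    unfolding dM_id_def dM_def X Y using Lambda_sq[of x]
    apply (simp add: vec_eq_iff forall_2 forall_3 matrix_matrix_mult_def sum_2 cscale_def
        Mfac_def pauli_dot_nth mat_def inner_vec_def sum_3 Lambda_def[symmetric])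
    apply (simp add: complex_eq_iff field_simps)
    apply (elim conjE, intro conjI; algebra)
    done
qed

lemma cscale_matrix_mult: "cscale c (U ** M) = U ** cscale c M"
  by (simp add: vec_eq_iff matrix_matrix_mult_def cscale_def sum_distrib_left mult_ac)

lemma cscale_0 [simp]: "cscale 0 M = 0"
  by (simp add: vec_eq_iff cscale_def)

lemma unitary2_cancel_left:
  assumes "unitary2 U" and "U ** M = U ** N"
  shows "M = N"
proof -
  let ?U' = "(\<chi> i j. cnj (U$j$i)) :: cmat"
  have U'U: "?U' ** U = mat 1" using assms(1) by (simp add: unitary2_def)
  have "M = (?U' ** U) ** M" by (simp add: U'U)
  also have "\<dots> = ?U' ** (U ** N)" by (simp add: assms(2) flip: matrix_mul_assoc)
  also have "\<dots> = N" by (simp add: U'U matrix_mul_assoc)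
  finally show ?thesis .
qed

lemma Jop_eq_J_frame:
  assumes "unitary2 U"
  shows "Jop U x X = J_frame x X"
  unfolding Jop_def
proof (rule the_equality)
  show "\<exists>c. dM U x (J_frame x X) = cscale \<i> (dM U x X) + cscale c (Mpt U x)"
    by (rule exI[of _ 0]) (simp add: dM_eq_mult_dM_id dM_id_J_frame cscale_matrix_mult)
next
  fix Y assume "\<exists>c. dM U x Y = cscale \<i> (dM U x X) + cscale c (Mpt U x)"
  then obtain c where "dM U x Y = cscale \<i> (dM U x X) + cscale c (Mpt U x)" by blast
  then have "U ** dM_id x Y = U ** (dM_id x (J_frame x X) + cscale c (Mfac x))"
    by (simp add: dM_eq_mult_dM_id Mpt_def dM_id_J_frame cscale_matrix_mult matrix_add_ldistrib)
  then have "dM_id x Y = dM_id x (J_frame x X) + cscale c (Mfac x)"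
    by (rule unitary2_cancel_left[OF assms])
  then show "Y = J_frame x X"
    by (rule dM_id_inj_mod_Mfac)
qed

lemma gamma_diff_right: "gamma A x X Z - gamma A x X Z' = gamma A x X (Z - Z')"
proof -
  obtain v w where X: "X = (v, w)" by (cases X)
  obtain v1 w1 where Z: "Z = (v1, w1)" by (cases Z)
  obtain v2 w2 where Z': "Z' = (v2, w2)" by (cases Z')
  show ?thesis
    unfolding gamma_def X Z Z' Let_def symp_def dl_def sig_def ldl_def lsig_def
    by (simp add: sum_3 inner_vec_def algebra_simps diff_divide_distrib)
qed

definition radial_coeff :: "(real \<Rightarrow> real) \<Rightarrow> real \<Rightarrow> real" where
  "radial_coeff A l = (1 + 2 * l\<^sup>2) * A l + (l + l^3) * deriv A l"

lemma gamma_radial_vertical: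
  assumes "x \<noteq> 0"
  shows "gamma A x X (0, u *\<^sub>R x) = u * (x \<bullet> snd X) / 4 * radial_coeff A (norm x)"
proof -
  obtain v w where X: "X = (v, w)" by (cases X)
  define l where "l = norm x"
  have "l \<noteq> 0" using assms by (simp add: l_def)
  moreover have "l\<^sup>2 = x$1^2 + x$2^2 + x$3^2" by (simp add: l_def norm_vec3_sq)
  ultimately show ?thesis
    unfolding gamma_def radial_coeff_def X Let_def symp_def dl_def sig_def ldl_def lsig_def
      l_def[symmetric]
    apply (simp add: sum_3 eps3_def inner_vec_def field_simps)
    apply algebra
    done
qed

lemma smooth_on_has_real_derivative:
  assumes "smooth_on S f" and "t \<in> S"
  shows "(f has_real_derivative deriv f t) (at t)"
proof -
  obtain D where "D 0 = f" and "\<forall>n. \<forall>t\<in>S. (D n has_real_derivative D (Suc n) t) (at t)"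
    using assms(1) unfolding smooth_on_def by blast
  then have "(f has_real_derivative D 1 t) (at t)" using assms(2) by force
  then show ?thesis by (simp add: DERIV_imp_deriv)
qed

lemma dH_eq:
  assumes "(H has_real_derivative d) (at (norm x))" and "x \<noteq> 0"
  shows "dH H x Y = d * (x \<bullet> fst Y) / norm x"
proof -
  have "((\<lambda>y. H (norm y)) has_derivative (\<lambda>h. d * (h \<bullet> sgn x))) (at x)"
    using has_derivative_compose[OF has_derivative_norm[OF assms(2)]
        assms(1)[unfolded has_field_derivative_def]]
    by simp
  then have "frechet_derivative (\<lambda>y. H (norm y)) (at x) = (\<lambda>h. d * (h \<bullet> sgn x))"
    by (rule frechet_derivative_at[symmetric])
  then show ?thesis
    unfolding dH_def by (simp add: sgn_div_norm inner_commute divide_inverse mult_ac)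
qed

lemma HamVF_eqI:
  assumes pos: "\<forall>W. W \<noteq> 0 \<longrightarrow> gamma A x W W > 0" and "unitary2 U"
    and Z: "\<forall>Y. gamma A x (J_frame x Y) Z = dH H x Y"
  shows "HamVF A H U x = Z"
  unfolding HamVF_def Omega_def Jop_eq_J_frame[OF \<open>unitary2 U\<close>]
proof (rule the_equality)
  show "\<forall>Y. gamma A x (J_frame x Y) Z = dH H x Y" by (fact Z)
next
  fix Z' assume Z': "\<forall>Y. gamma A x (J_frame x Y) Z' = dH H x Y"
  have "gamma A x (Z' - Z) (Z' - Z) = 0"
    using Z'[rule_format, of "J_frame x (Z - Z')"] Z[rule_format, of "J_frame x (Z - Z')"]
    by (simp add: J_frame_J_frame flip: gamma_diff_right)
  then show "Z' = Z" using pos by (metis less_irrefl right_minus_eq)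
qed

theorem proposition5p1:
  fixes A H :: "real \<Rightarrow> real" and U :: cmat and x :: "real^3"
  assumes "smooth_on {0<..} A" and "smooth_on {0<..} H"
    and "\<forall>y::real^3. y \<noteq> 0 \<longrightarrow> (\<forall>X. X \<noteq> 0 \<longrightarrow> gamma A y X X > 0)"
    and "unitary2 U" and "x \<noteq> 0"
  shows "HamVF A H U x =
           (0, (2 * sqrt (1 + (norm x)\<^sup>2) * deriv H (norm x)
                / ((1 + 2 * (norm x)\<^sup>2) * A (norm x) + (norm x + (norm x)^3) * deriv A (norm x)))
               *\<^sub>R ((1 / norm x) *\<^sub>R x))"
proof -
  have pos: "\<forall>W. W \<noteq> 0 \<longrightarrow> gamma A x W W > 0" using assms(3,5) by blast
  then have "gamma A x (0, x) (0, 1 *\<^sub>R x) > 0" using assms(5) by (simp add: zero_prod_def)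
  then have D: "radial_coeff A (norm x) \<noteq> 0"
    unfolding gamma_radial_vertical[OF assms(5)] by auto
  have H': "(H has_real_derivative deriv H (norm x)) (at (norm x))"
    using smooth_on_has_real_derivative[OF assms(2)] assms(5) by simp
  define k where "k = 2 * Lambda x * deriv H (norm x) / radial_coeff A (norm x) / norm x"
  have "gamma A x (J_frame x Y) (0, k *\<^sub>R x) = dH H x Y" for Y
    using D Lambda_pos[of x] assms(5)
    by (simp add: gamma_radial_vertical inner_snd_J_frame dH_eq[OF H' assms(5)] k_def)
  then have "HamVF A H U x = (0, k *\<^sub>R x)"
    using HamVF_eqI[OF pos assms(4)] by blast
  then show ?thesis
    by (simp add: k_def Lambda_def radial_coeff_def)
qed

end
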